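(* Let $G=(V_1,E_1)$ and $H=(V_2,E_2)$ be digraphs. If both $G$ and $H$ satisfy one of the following properties, then so do $G\mathbin{\dot\cup}H$ and $G\mathbin{\overline{\cup}}H$: (1) congruence $n$-permutability for some $n$; (2) congruence modularity; (3) the Hobby–McKenzie property.
   Context: Digraphs are finite and loopless. $G\mathbin{\dot\cup}H$ is the disjoint union digraph; $G\mathbin{\overline{\cup}}H$ is the same structure with two additional unary relations interpreted as $V_1$ and $V_2$. Polymorphisms of a structure are maps from tuples to elements preserving every relation coordinatewise; a structure has a property if it has polymorphisms satisfying the indicated equations for all values of the variables. Congruence $n$-permutable: ternary polymorphisms $p_0,\dots,p_n$ with $p_0(x,y,z)=x$, $p_i(x,x,y)=p_{i+1}(x,y,y)$ for $i<n$, $p_n(x,y,z)=z$. Congruence modular: ternary polymorphisms $s_0,\dots,s_{2n},p$ with $s_0(x,y,z)=x$, $s_i(x,y,x)=x$, $s_i(x,y,y)=s_{i+1}(x,y,y)$ for even $i<2n$, $s_i(x,x,y)=s_{i+1}(x,x,y)$ for odd $i<2n$, $s_{2n}(x,y,y)=p(x,y,y)$, $p(x,x,y)=y$. Hobby–McKenzie: there are $n\ge0$ and idempotent ternary polymorphisms $d_0,\dots,d_n,p,e_0,\dots,e_n$ with $x=d_0(x,y,z)$, $e_n(x,y,z)=z$; $d_i(x,y,y)=d_{i+1}(x,y,y)$ and $e_i(x,y,y)=e_{i+1}(x,y,y)$ for even $i<n$; $d_i(x,x,y)=d_{i+1}(x,x,y)$ and $e_i(x,x,y)=e_{i+1}(x,x,y)$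 for odd $i<n$; $d_n(x,y,y)=p(x,y,y)$ and $p(x,x,y)=e_0(x,x,y)$; $d_i(x,y,x)=d_{i+1}(x,y,x)$ for odd $i<n$ and $e_j(x,y,x)=e_{j+1}(x,y,x)$ for even $j<n$. *)

theory Defs
  imports Main
begin

record 'v rstruct =
  carrier :: "'v set"
  edges :: "('v \<times> 'v) set"
  unaries :: "'v set set"

definition digraph :: "'v set \<Rightarrow> ('v \<times> 'v) set \<Rightarrow> bool" where
  "digraph V E \<longleftrightarrow> finite V \<and> E \<subseteq> V \<times> V \<and> (\<forall>v. (v, v) \<notin> E)"

definition dg :: "'v set \<Rightarrow> ('v \<times> 'v) set \<Rightarrow> 'v rstruct" where
  "dg V E = \<lparr>carrier = V, edges = E, unaries = {}\<rparr>"

definition dunion :: "'a set \<Rightarrow> ('a \<times> 'a) set \<Rightarrow> 'b set \<Rightarrow> ('b \<times> 'b) set \<Rightarrow> ('a + 'b) rstruct" where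
  "dunion V1 E1 V2 E2 = \<lparr>carrier = Inl ` V1 \<union> Inr ` V2,
     edges = map_prod Inl Inl ` E1 \<union> map_prod Inr Inr ` E2, unaries = {}\<rparr>"

definition dunion_marked :: "'a set \<Rightarrow> ('a \<times> 'a) set \<Rightarrow> 'b set \<Rightarrow> ('b \<times> 'b) set \<Rightarrow> ('a + 'b) rstruct" where
  "dunion_marked V1 E1 V2 E2 = \<lparr>carrier = Inl ` V1 \<union> Inr ` V2,
     edges = map_prod Inl Inl ` E1 \<union> map_prod Inr Inr ` E2, unaries = {Inl ` V1, Inr ` V2}\<rparr>"

definition tpol :: "('v, 'm) rstruct_scheme \<Rightarrow> ('v \<Rightarrow> 'v \<Rightarrow> 'v \<Rightarrow> 'v) \<Rightarrow> bool" where
  "tpol S f \<longleftrightarrow>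
     (\<forall>x\<in>carrier S. \<forall>y\<in>carrier S. \<forall>z\<in>carrier S. f x y z \<in> carrier S) \<and>
     (\<forall>x1 y1 x2 y2 x3 y3. (x1, y1) \<in> edges S \<longrightarrow> (x2, y2) \<in> edges S \<longrightarrow> (x3, y3) \<in> edges S
        \<longrightarrow> (f x1 x2 x3, f y1 y2 y3) \<in> edges S) \<and>
     (\<forall>U\<in>unaries S. \<forall>x\<in>U. \<forall>y\<in>U. \<forall>z\<in>U. f x y z \<in> U)"

definition n_permutable :: "nat \<Rightarrow> ('v, 'm) rstruct_scheme \<Rightarrow> bool" where
  "n_permutable n S \<longleftrightarrow> (\<exists>p :: nat \<Rightarrow> 'v \<Rightarrow> 'v \<Rightarrow> 'v \<Rightarrow> 'v.
     (\<forall>i\<le>n. tpol S (p i)) \<and>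
     (\<forall>x\<in>carrier S. \<forall>y\<in>carrier S. \<forall>z\<in>carrier S.
        p 0 x y z = x \<and> (\<forall>i<n. p i x x y = p (Suc i) x y y) \<and> p n x y z = z))"

definition cong_permutable :: "('v, 'm) rstruct_scheme \<Rightarrow> bool" where
  "cong_permutable S \<longleftrightarrow> (\<exists>n. n_permutable n S)"

definition cong_modular :: "('v, 'm) rstruct_scheme \<Rightarrow> bool" where
  "cong_modular S \<longleftrightarrow> (\<exists>n (s :: nat \<Rightarrow> 'v \<Rightarrow> 'v \<Rightarrow> 'v \<Rightarrow> 'v) p.
     (\<forall>i\<le>2*n. tpol S (s i)) \<and> tpol S p \<and>
     (\<forall>x\<in>carrier S. \<forall>y\<in>carrier S. \<forall>z\<in>carrier S.
        s 0 x y z = x \<and>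
        (\<forall>i\<le>2*n. s i x y x = x) \<and>
        (\<forall>i<2*n. even i \<longrightarrow> s i x y y = s (Suc i) x y y) \<and>
        (\<forall>i<2*n. odd i \<longrightarrow> s i x x y = s (Suc i) x x y) \<and>
        s (2*n) x y y = p x y y \<and>
        p x x y = y))"

definition hobby_mckenzie :: "('v, 'm) rstruct_scheme \<Rightarrow> bool" where
  "hobby_mckenzie S \<longleftrightarrow> (\<exists>n (d :: nat \<Rightarrow> 'v \<Rightarrow> 'v \<Rightarrow> 'v \<Rightarrow> 'v) p e.
     (\<forall>i\<le>n. tpol S (d i) \<and> tpol S (e i)) \<and> tpol S p \<and>
     (\<forall>x\<in>carrier S. (\<forall>i\<le>n. d i x x x = x \<and> e i x x x = x) \<and> p x x x = x) \<and>
     (\<forall>x\<in>carrier S. \<forall>y\<in>carrier S. \<forall>z\<in>carrier S.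
        d 0 x y z = x \<and> e n x y z = z \<and>
        (\<forall>i<n. even i \<longrightarrow> d i x y y = d (Suc i) x y y \<and> e i x y y = e (Suc i) x y y) \<and>
        (\<forall>i<n. odd i \<longrightarrow> d i x x y = d (Suc i) x x y \<and> e i x x y = e (Suc i) x x y) \<and>
        d n x y y = p x y y \<and> p x x y = e 0 x x y \<and>
        (\<forall>i<n. odd i \<longrightarrow> d i x y x = d (Suc i) x y x) \<and>
        (\<forall>j<n. even j \<longrightarrow> e j x y x = e (Suc j) x y x)))"

end

theory Submission
  imports Defs
begin

text \<open>An operation on the disjoint union is glued from one operation on each component: it
acts componentwise on triples inside one component and, on triples meeting both components, as
a projection chosen from the pattern of components. No edge joins the two components, so the
two ends of edge-related triples have the same pattern, which makes every glued operation a
polymorphism that also preserves \<open>V1\<close> and \<open>V2\<close>. After lengthening both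
term chains to a common length, the identities hold on mixed triples once the projections are
chosen suitably: the first projection for the chains starting at \<open>x\<close>, the third for
those ending at \<open>z\<close>, and for \<open>p\<close> the choice returning \<open>x\<close> on
\<open>(x, y, y)\<close> and \<open>y\<close> on \<open>(x, x, y)\<close>.\<close>

definition side_proj :: "(bool \<Rightarrow> bool \<Rightarrow> bool \<Rightarrow> nat) \<Rightarrow> 'c + 'd \<Rightarrow> 'c + 'd \<Rightarrow> 'c + 'd \<Rightarrow> 'c + 'd" where
  "side_proj k x y z = (case k (isl x) (isl y) (isl z) of 0 \<Rightarrow> x | Suc 0 \<Rightarrow> y | _ \<Rightarrow> z)"

definition sum_op :: "('c \<Rightarrow> 'c \<Rightarrow> 'c \<Rightarrow> 'c) \<Rightarrow> ('d \<Rightarrow> 'd \<Rightarrow> 'd \<Rightarrow> 'd) \<Rightarrow> (bool \<Rightarrow> bool \<Rightarrow> bool \<Rightarrow> nat)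
    \<Rightarrow> 'c + 'd \<Rightarrow> 'c + 'd \<Rightarrow> 'c + 'd \<Rightarrow> 'c + 'd" where
  "sum_op f g k x y z = (case (x, y, z) of
       (Inl a, Inl b, Inl c) \<Rightarrow> Inl (f a b c)
     | (Inr a, Inr b, Inr c) \<Rightarrow> Inr (g a b c)
     | _ \<Rightarrow> side_proj k x y z)"

lemma sum_op_Inl [simp]: "sum_op f g k (Inl a) (Inl b) (Inl c) = Inl (f a b c)"
  by (simp add: sum_op_def)

lemma sum_op_Inr [simp]: "sum_op f g k (Inr a) (Inr b) (Inr c) = Inr (g a b c)"
  by (simp add: sum_op_def)

lemma sum_op_mixed: "\<not> (isl x = isl y \<and> isl y = isl z) \<Longrightarrow> sum_op f g k x y z = side_proj k x y z"
  by (cases x; cases y; cases z) (auto simp: sum_op_def)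

lemma side_proj_in: "side_proj k x y z \<in> {x, y, z}"
  by (auto simp: side_proj_def split: nat.split)

lemma side_proj_rel:
  assumes "R x1 y1" "R x2 y2" "R x3 y3"
    and "isl x1 = isl y1" "isl x2 = isl y2" "isl x3 = isl y3"
  shows "R (side_proj k x1 x2 x3) (side_proj k y1 y2 y3)"
  using assms by (simp add: side_proj_def split: nat.split)

lemma carrier_dg [simp]: "carrier (dg V E) = V"
  by (simp add: dg_def)

lemma carrier_dunion [simp]:
  "carrier (dunion V1 E1 V2 E2) = Inl ` V1 \<union> Inr ` V2"
  "carrier (dunion_marked V1 E1 V2 E2) = Inl ` V1 \<union> Inr ` V2"
  by (simp_all add: dunion_def dunion_marked_def)

lemma tpol_dg_iff:
  "tpol (dg V E) f \<longleftrightarrow> (\<forall>x\<in>V. \<forall>y\<in>V. \<forall>z\<in>V. f x y z \<in> V) \<and>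
     (\<forall>x1 y1 x2 y2 x3 y3. (x1, y1) \<in> E \<longrightarrow> (x2, y2) \<in> E \<longrightarrow> (x3, y3) \<in> E
        \<longrightarrow> (f x1 x2 x3, f y1 y2 y3) \<in> E)"
  by (simp add: tpol_def dg_def)

lemma tpol_sum_op:
  assumes f: "tpol (dg V1 E1) f" and g: "tpol (dg V2 E2) g"
  shows "tpol (dunion V1 E1 V2 E2) (sum_op f g k)"
    and "tpol (dunion_marked V1 E1 V2 E2) (sum_op f g k)"
proof -
  let ?C = "Inl ` V1 \<union> Inr ` V2"
  let ?E = "map_prod Inl Inl ` E1 \<union> map_prod Inr Inr ` E2"
  have closed: "sum_op f g k x y z \<in> ?C" if "x \<in> ?C" "y \<in> ?C" "z \<in> ?C" for x y z
  proof (cases "isl x = isl y \<and> isl y = isl z")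
    case True
    with that f g show ?thesis by (cases x; cases y; cases z) (auto simp: tpol_dg_iff)
  next
    case False
    with that side_proj_in[of k x y z] show ?thesis by (auto simp: sum_op_mixed)
  qed
  have edge: "(sum_op f g k x1 x2 x3, sum_op f g k y1 y2 y3) \<in> ?E"
    if "(x1, y1) \<in> ?E" "(x2, y2) \<in> ?E" "(x3, y3) \<in> ?E" for x1 x2 x3 y1 y2 y3
  proof (cases "isl x1 = isl x2 \<and> isl x2 = isl x3")
    case True
    with that f g show ?thesis by (auto 0 4 simp: tpol_dg_iff intro: rev_image_eqI)
  next
    case False
    have sides: "isl x1 = isl y1" "isl x2 = isl y2" "isl x3 = isl y3" using that by auto
    with False have mixed: "\<not> (isl y1 = isl y2 \<and> isl y2 = isl y3)" by simp
    show ?thesis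
      unfolding sum_op_mixed[OF False] sum_op_mixed[OF mixed]
      using side_proj_rel[where R = "\<lambda>u v. (u, v) \<in> ?E", OF that sides] .
  qed
  have "sum_op f g k x y z \<in> Inl ` V1" if "x \<in> Inl ` V1" "y \<in> Inl ` V1" "z \<in> Inl ` V1" for x y z
    using that f by (auto simp: tpol_dg_iff)
  moreover have "sum_op f g k x y z \<in> Inr ` V2" if "x \<in> Inr ` V2" "y \<in> Inr ` V2" "z \<in> Inr ` V2" for x y z
    using that g by (auto simp: tpol_dg_iff)
  ultimately show "tpol (dunion V1 E1 V2 E2) (sum_op f g k)"
    and "tpol (dunion_marked V1 E1 V2 E2) (sum_op f g k)"
    using closed edge by (simp_all add: tpol_def dunion_def dunion_marked_def)
qed

text \<open>Used to drop the unused third variable from the two-variable identities in the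
definitions of the term conditions.\<close>

lemma ball3_diag: "\<forall>x\<in>A. \<forall>y\<in>A. \<forall>z\<in>A. P x y z \<Longrightarrow> \<forall>x\<in>A. \<forall>y\<in>A. P x y x"
  by blast

lemma chain_step_min:
  assumes "\<And>i. i < k \<Longrightarrow> P i \<Longrightarrow> f i = g (Suc i)" and "f k = g k" and "P i"
  shows "f (min i k) = g (min (Suc i) k)"
  using assms by (cases "i < k") (simp_all add: min_def)

definition maltsev_choice :: "bool \<Rightarrow> bool \<Rightarrow> bool \<Rightarrow> nat" where
  "maltsev_choice a b c = (if b = c then 0 else 2)"

locale hagemann_mitschke_terms =
  fixes n :: nat and S :: "('v, 'm) rstruct_scheme" and p :: "nat \<Rightarrow> 'v \<Rightarrow> 'v \<Rightarrow> 'v \<Rightarrow> 'v"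
  assumes tpol_p: "i \<le> n \<Longrightarrow> tpol S (p i)"
    and p_first: "x \<in> carrier S \<Longrightarrow> y \<in> carrier S \<Longrightarrow> z \<in> carrier S \<Longrightarrow> p 0 x y z = x"
    and p_step: "x \<in> carrier S \<Longrightarrow> y \<in> carrier S \<Longrightarrow> i < n \<Longrightarrow> p i x x y = p (Suc i) x y y"
    and p_last: "x \<in> carrier S \<Longrightarrow> y \<in> carrier S \<Longrightarrow> z \<in> carrier S \<Longrightarrow> p n x y z = z"

lemma n_permutable_iff_hagemann_mitschke_terms:
  "n_permutable n S \<longleftrightarrow> (\<exists>p. hagemann_mitschke_terms n S p)"
  unfolding n_permutable_def hagemann_mitschke_terms_def
  by (intro ex_cong1 iffI; elim conjE; (frule ball3_diag)?;
      (simp only: ball_conj_distrib all_conj_distrib imp_conjR)?; (elim conjE)?;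
      intro conjI allI impI ballI; simp (no_asm_simp))

lemma (in hagemann_mitschke_terms) lengthen:
  assumes "n \<le> m"
  shows "hagemann_mitschke_terms m S (\<lambda>i. p (min i n))"
proof
  fix x y i
  assume "x \<in> carrier S" "y \<in> carrier S"
  then show "p (min i n) x x y = p (min (Suc i) n) x y y"
    using chain_step_min[where f = "\<lambda>j. p j x x y" and g = "\<lambda>j. p j x y y" and P = "\<lambda>_. True"]
    by (simp add: p_step p_last)
qed (use assms tpol_p p_first p_last in auto)

lemma hagemann_mitschke_terms_dunion:
  assumes "hagemann_mitschke_terms n (dg V1 E1) p1" and "hagemann_mitschke_terms n (dg V2 E2) p2"
    and "2 \<le> n"
  \<comment> \<open>On mixed triples \<open>q 0\<close> is the first and \<open>q i\<close>, \<open>i \<ge> 2\<close>, the third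
    projection, bridged by \<open>q 1\<close>; this needs \<open>2 \<le> n\<close>.\<close>
  defines "q \<equiv> \<lambda>i. sum_op (p1 i) (p2 i)
    (if i = 0 then (\<lambda>_ _ _. 0) else if i = 1 then maltsev_choice else (\<lambda>_ _ _. 2))"
  shows "hagemann_mitschke_terms n (dunion V1 E1 V2 E2) q"
    and "hagemann_mitschke_terms n (dunion_marked V1 E1 V2 E2) q"
proof -
  interpret H1: hagemann_mitschke_terms n "dg V1 E1" p1 by fact
  interpret H2: hagemann_mitschke_terms n "dg V2 E2" p2 by fact
  show "hagemann_mitschke_terms n (dunion V1 E1 V2 E2) q"
    and "hagemann_mitschke_terms n (dunion_marked V1 E1 V2 E2) q"
    using assms(3)
    by (unfold_locales; auto simp: q_def tpol_sum_op H1.tpol_p H2.tpol_p H1.p_first H2.p_first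
        H1.p_step H2.p_step H1.p_last H2.p_last sum_op_mixed side_proj_def maltsev_choice_def)+
qed

locale gumm_terms =
  fixes n :: nat and S :: "('v, 'm) rstruct_scheme"
    and s :: "nat \<Rightarrow> 'v \<Rightarrow> 'v \<Rightarrow> 'v \<Rightarrow> 'v" and p :: "'v \<Rightarrow> 'v \<Rightarrow> 'v \<Rightarrow> 'v"
  assumes tpol_s: "i \<le> 2*n \<Longrightarrow> tpol S (s i)"
    and tpol_p: "tpol S p"
    and s_first: "x \<in> carrier S \<Longrightarrow> y \<in> carrier S \<Longrightarrow> z \<in> carrier S \<Longrightarrow> s 0 x y z = x"
    and s_xyx: "x \<in> carrier S \<Longrightarrow> y \<in> carrier S \<Longrightarrow> i \<le> 2*n \<Longrightarrow> s i x y x = x"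
    and s_step_even: "x \<in> carrier S \<Longrightarrow> y \<in> carrier S \<Longrightarrow> i < 2*n \<Longrightarrow> even i \<Longrightarrow>
      s i x y y = s (Suc i) x y y"
    and s_step_odd: "x \<in> carrier S \<Longrightarrow> y \<in> carrier S \<Longrightarrow> i < 2*n \<Longrightarrow> odd i \<Longrightarrow>
      s i x x y = s (Suc i) x x y"
    and s_last: "x \<in> carrier S \<Longrightarrow> y \<in> carrier S \<Longrightarrow> s (2*n) x y y = p x y y"
    and p_xxy: "x \<in> carrier S \<Longrightarrow> y \<in> carrier S \<Longrightarrow> p x x y = y"

lemma cong_modular_iff_gumm_terms: "cong_modular S \<longleftrightarrow> (\<exists>n s p. gumm_terms n S s p)"
  unfolding cong_modular_def gumm_terms_def
  by (intro ex_cong1 iffI; elim conjE; (frule ball3_diag)?;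
      (simp only: ball_conj_distrib all_conj_distrib imp_conjR)?; (elim conjE)?;
      intro conjI allI impI ballI; simp (no_asm_simp))

lemma (in gumm_terms) lengthen:
  assumes "n \<le> m"
  shows "gumm_terms m S (\<lambda>i. s (min i (2*n))) p"
proof
  fix x y i
  assume "x \<in> carrier S" "y \<in> carrier S"
  then show "even i \<Longrightarrow> s (min i (2*n)) x y y = s (min (Suc i) (2*n)) x y y"
    and "odd i \<Longrightarrow> s (min i (2*n)) x x y = s (min (Suc i) (2*n)) x x y"
    using chain_step_min[where f = "\<lambda>j. s j x y y" and g = "\<lambda>j. s j x y y" and P = even]
      chain_step_min[where f = "\<lambda>j. s j x x y" and g = "\<lambda>j. s j x x y" and P = odd]
    by (simp_all add: s_step_even s_step_odd)
qed (use assms tpol_s tpol_p s_first s_xyx s_last p_xxy in auto)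

lemma gumm_terms_dunion:
  assumes "gumm_terms n (dg V1 E1) s1 p1" and "gumm_terms n (dg V2 E2) s2 p2"
  defines "s \<equiv> \<lambda>i. sum_op (s1 i) (s2 i) (\<lambda>_ _ _. 0)" and "p \<equiv> sum_op p1 p2 maltsev_choice"
  shows "gumm_terms n (dunion V1 E1 V2 E2) s p"
    and "gumm_terms n (dunion_marked V1 E1 V2 E2) s p"
proof -
  interpret G1: gumm_terms n "dg V1 E1" s1 p1 by fact
  interpret G2: gumm_terms n "dg V2 E2" s2 p2 by fact
  show "gumm_terms n (dunion V1 E1 V2 E2) s p"
    and "gumm_terms n (dunion_marked V1 E1 V2 E2) s p"
    by (unfold_locales; auto simp: s_def p_def tpol_sum_op G1.tpol_s G2.tpol_s G1.tpol_p G2.tpol_p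
        G1.s_first G2.s_first G1.s_xyx G2.s_xyx G1.s_step_even G2.s_step_even
        G1.s_step_odd G2.s_step_odd G1.s_last G2.s_last G1.p_xxy G2.p_xxy
        sum_op_mixed side_proj_def maltsev_choice_def)+
qed

locale hobby_mckenzie_terms =
  fixes n :: nat and S :: "('v, 'm) rstruct_scheme"
    and d :: "nat \<Rightarrow> 'v \<Rightarrow> 'v \<Rightarrow> 'v \<Rightarrow> 'v" and p :: "'v \<Rightarrow> 'v \<Rightarrow> 'v \<Rightarrow> 'v"
    and e :: "nat \<Rightarrow> 'v \<Rightarrow> 'v \<Rightarrow> 'v \<Rightarrow> 'v"
  assumes tpol_d: "i \<le> n \<Longrightarrow> tpol S (d i)"
    and tpol_e: "i \<le> n \<Longrightarrow> tpol S (e i)"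
    and tpol_p: "tpol S p"
    and d_idem: "x \<in> carrier S \<Longrightarrow> i \<le> n \<Longrightarrow> d i x x x = x"
    and e_idem: "x \<in> carrier S \<Longrightarrow> i \<le> n \<Longrightarrow> e i x x x = x"
    and p_idem: "x \<in> carrier S \<Longrightarrow> p x x x = x"
    and d_first: "x \<in> carrier S \<Longrightarrow> y \<in> carrier S \<Longrightarrow> z \<in> carrier S \<Longrightarrow> d 0 x y z = x"
    and e_last: "x \<in> carrier S \<Longrightarrow> y \<in> carrier S \<Longrightarrow> z \<in> carrier S \<Longrightarrow> e n x y z = z"
    and d_step_xyy: "x \<in> carrier S \<Longrightarrow> y \<in> carrier S \<Longrightarrow> i < n \<Longrightarrow> even i \<Longrightarrow>
      d i x y y = d (Suc i) x y y"
    and e_step_xyy: "x \<in> carrier S \<Longrightarrow> y \<in> carrier S \<Longrightarrow> i < n \<Longrightarrow> even i \<Longrightarrow>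
      e i x y y = e (Suc i) x y y"
    and d_step_xxy: "x \<in> carrier S \<Longrightarrow> y \<in> carrier S \<Longrightarrow> i < n \<Longrightarrow> odd i \<Longrightarrow>
      d i x x y = d (Suc i) x x y"
    and e_step_xxy: "x \<in> carrier S \<Longrightarrow> y \<in> carrier S \<Longrightarrow> i < n \<Longrightarrow> odd i \<Longrightarrow>
      e i x x y = e (Suc i) x x y"
    and d_step_xyx: "x \<in> carrier S \<Longrightarrow> y \<in> carrier S \<Longrightarrow> i < n \<Longrightarrow> odd i \<Longrightarrow>
      d i x y x = d (Suc i) x y x"
    and e_step_xyx: "x \<in> carrier S \<Longrightarrow> y \<in> carrier S \<Longrightarrow> i < n \<Longrightarrow> even i \<Longrightarrow>
      e i x y x = e (Suc i) x y x"
    and d_last: "x \<in> carrier S \<Longrightarrow> y \<in> carrier S \<Longrightarrow> d n x y y = p x y y"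
    and p_xxy: "x \<in> carrier S \<Longrightarrow> y \<in> carrier S \<Longrightarrow> p x x y = e 0 x x y"

lemma hobby_mckenzie_iff_terms: "hobby_mckenzie S \<longleftrightarrow> (\<exists>n d p e. hobby_mckenzie_terms n S d p e)"
  unfolding hobby_mckenzie_def hobby_mckenzie_terms_def
  by (intro ex_cong1 iffI; elim conjE; (frule ball3_diag)?;
      (simp only: ball_conj_distrib all_conj_distrib imp_conjR)?; (elim conjE)?;
      intro conjI allI impI ballI; simp (no_asm_simp))

lemma (in hobby_mckenzie_terms) lengthen:
  assumes "n \<le> m"
  shows "hobby_mckenzie_terms m S (\<lambda>i. d (min i n)) p (\<lambda>i. e (min i n))"
proof
  fix x y i
  assume "x \<in> carrier S" "y \<in> carrier S"
  then show "even i \<Longrightarrow> d (min i n) x y y = d (min (Suc i) n) x y y"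
    and "even i \<Longrightarrow> e (min i n) x y y = e (min (Suc i) n) x y y"
    and "odd i \<Longrightarrow> d (min i n) x x y = d (min (Suc i) n) x x y"
    and "odd i \<Longrightarrow> e (min i n) x x y = e (min (Suc i) n) x x y"
    and "odd i \<Longrightarrow> d (min i n) x y x = d (min (Suc i) n) x y x"
    and "even i \<Longrightarrow> e (min i n) x y x = e (min (Suc i) n) x y x"
    using chain_step_min[where f = "\<lambda>j. d j x y y" and g = "\<lambda>j. d j x y y" and P = even]
      chain_step_min[where f = "\<lambda>j. e j x y y" and g = "\<lambda>j. e j x y y" and P = even]
      chain_step_min[where f = "\<lambda>j. d j x x y" and g = "\<lambda>j. d j x x y" and P = odd]
      chain_step_min[where f = "\<lambda>j. e j x x y" and g = "\<lambda>j. e j x x y" and P = odd]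
      chain_step_min[where f = "\<lambda>j. d j x y x" and g = "\<lambda>j. d j x y x" and P = odd]
      chain_step_min[where f = "\<lambda>j. e j x y x" and g = "\<lambda>j. e j x y x" and P = even]
    by (simp_all add: d_step_xyy e_step_xyy d_step_xxy e_step_xxy d_step_xyx e_step_xyx)
qed (use assms tpol_d tpol_e tpol_p d_idem e_idem p_idem d_first e_last d_last p_xxy in auto)

lemma hobby_mckenzie_terms_dunion:
  assumes "hobby_mckenzie_terms n (dg V1 E1) d1 p1 e1" and "hobby_mckenzie_terms n (dg V2 E2) d2 p2 e2"
  defines "d \<equiv> \<lambda>i. sum_op (d1 i) (d2 i) (\<lambda>_ _ _. 0)" and "p \<equiv> sum_op p1 p2 maltsev_choice"
    and "e \<equiv> \<lambda>i. sum_op (e1 i) (e2 i) (\<lambda>_ _ _. 2)"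
  shows "hobby_mckenzie_terms n (dunion V1 E1 V2 E2) d p e"
    and "hobby_mckenzie_terms n (dunion_marked V1 E1 V2 E2) d p e"
proof -
  interpret H1: hobby_mckenzie_terms n "dg V1 E1" d1 p1 e1 by fact
  interpret H2: hobby_mckenzie_terms n "dg V2 E2" d2 p2 e2 by fact
  show "hobby_mckenzie_terms n (dunion V1 E1 V2 E2) d p e"
    and "hobby_mckenzie_terms n (dunion_marked V1 E1 V2 E2) d p e"
    by (unfold_locales; auto simp: d_def p_def e_def tpol_sum_op sum_op_mixed side_proj_def maltsev_choice_def
        H1.tpol_d H2.tpol_d H1.tpol_e H2.tpol_e H1.tpol_p H2.tpol_p
        H1.d_idem H2.d_idem H1.e_idem H2.e_idem H1.p_idem H2.p_idem
        H1.d_first H2.d_first H1.e_last H2.e_last H1.d_last H2.d_last H1.p_xxy H2.p_xxy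
        H1.d_step_xyy H2.d_step_xyy H1.e_step_xyy H2.e_step_xyy
        H1.d_step_xxy H2.d_step_xxy H1.e_step_xxy H2.e_step_xxy
        H1.d_step_xyx H2.d_step_xyx H1.e_step_xyx H2.e_step_xyx)+
qed

lemma cong_permutable_dunion:
  assumes "cong_permutable (dg V1 E1)" and "cong_permutable (dg V2 E2)"
  shows "cong_permutable (dunion V1 E1 V2 E2)" and "cong_permutable (dunion_marked V1 E1 V2 E2)"
proof -
  obtain n1 p1 n2 p2 where H1: "hagemann_mitschke_terms n1 (dg V1 E1) p1"
    and H2: "hagemann_mitschke_terms n2 (dg V2 E2) p2"
    using assms by (auto simp: cong_permutable_def n_permutable_iff_hagemann_mitschke_terms)
  define N where "N = max 2 (max n1 n2)"
  have "hagemann_mitschke_terms N (dg V1 E1) (\<lambda>i. p1 (min i n1))"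
    and "hagemann_mitschke_terms N (dg V2 E2) (\<lambda>i. p2 (min i n2))"
    and "2 \<le> N"
    using hagemann_mitschke_terms.lengthen[OF H1] hagemann_mitschke_terms.lengthen[OF H2]
    by (simp_all add: N_def)
  from hagemann_mitschke_terms_dunion[OF this]
  show "cong_permutable (dunion V1 E1 V2 E2)" and "cong_permutable (dunion_marked V1 E1 V2 E2)"
    by (auto simp: cong_permutable_def n_permutable_iff_hagemann_mitschke_terms)
qed

lemma cong_modular_dunion:
  assumes "cong_modular (dg V1 E1)" and "cong_modular (dg V2 E2)"
  shows "cong_modular (dunion V1 E1 V2 E2)" and "cong_modular (dunion_marked V1 E1 V2 E2)"
proof -
  obtain n1 s1 p1 n2 s2 p2 where G1: "gumm_terms n1 (dg V1 E1) s1 p1"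
    and G2: "gumm_terms n2 (dg V2 E2) s2 p2"
    using assms by (auto simp: cong_modular_iff_gumm_terms)
  define N where "N = max n1 n2"
  have "gumm_terms N (dg V1 E1) (\<lambda>i. s1 (min i (2*n1))) p1"
    and "gumm_terms N (dg V2 E2) (\<lambda>i. s2 (min i (2*n2))) p2"
    using gumm_terms.lengthen[OF G1] gumm_terms.lengthen[OF G2] by (simp_all add: N_def)
  from gumm_terms_dunion[OF this]
  show "cong_modular (dunion V1 E1 V2 E2)" and "cong_modular (dunion_marked V1 E1 V2 E2)"
    by (auto simp: cong_modular_iff_gumm_terms)
qed

lemma hobby_mckenzie_dunion:
  assumes "hobby_mckenzie (dg V1 E1)" and "hobby_mckenzie (dg V2 E2)"
  shows "hobby_mckenzie (dunion V1 E1 V2 E2)" and "hobby_mckenzie (dunion_marked V1 E1 V2 E2)"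
proof -
  obtain n1 d1 p1 e1 n2 d2 p2 e2 where H1: "hobby_mckenzie_terms n1 (dg V1 E1) d1 p1 e1"
    and H2: "hobby_mckenzie_terms n2 (dg V2 E2) d2 p2 e2"
    using assms by (auto simp: hobby_mckenzie_iff_terms)
  define N where "N = max n1 n2"
  have "hobby_mckenzie_terms N (dg V1 E1) (\<lambda>i. d1 (min i n1)) p1 (\<lambda>i. e1 (min i n1))"
    and "hobby_mckenzie_terms N (dg V2 E2) (\<lambda>i. d2 (min i n2)) p2 (\<lambda>i. e2 (min i n2))"
    using hobby_mckenzie_terms.lengthen[OF H1] hobby_mckenzie_terms.lengthen[OF H2]
    by (simp_all add: N_def)
  from hobby_mckenzie_terms_dunion[OF this]
  show "hobby_mckenzie (dunion V1 E1 V2 E2)" and "hobby_mckenzie (dunion_marked V1 E1 V2 E2)"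
    by (auto simp: hobby_mckenzie_iff_terms)
qed

theorem lemma4p2:
  fixes V1 :: "'a set" and E1 :: "('a \<times> 'a) set"
    and V2 :: "'b set" and E2 :: "('b \<times> 'b) set"
  assumes "digraph V1 E1" and "digraph V2 E2"
  shows "(cong_permutable (dg V1 E1) \<and> cong_permutable (dg V2 E2) \<longrightarrow>
            cong_permutable (dunion V1 E1 V2 E2) \<and> cong_permutable (dunion_marked V1 E1 V2 E2)) \<and>
         (cong_modular (dg V1 E1) \<and> cong_modular (dg V2 E2) \<longrightarrow>
            cong_modular (dunion V1 E1 V2 E2) \<and> cong_modular (dunion_marked V1 E1 V2 E2)) \<and>
         (hobby_mckenzie (dg V1 E1) \<and> hobby_mckenzie (dg V2 E2) \<longrightarrow>
            hobby_mckenzie (dunion V1 E1 V2 E2) \<and> hobby_mckenzie (dunion_marked V1 E1 V2 E2))"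
  by (simp add: cong_permutable_dunion cong_modular_dunion hobby_mckenzie_dunion)

end
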